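(* Let $\gamma\in(0,2)$, $d\ge1$ and $G\in S^d_{\gamma,0}$. Then $\lim_{n\to\infty}Y^n_{\mathrm{SEP}}(G)=0$, where $$Y^n_{\mathrm{SEP}}(G)=\sup_{s\in[0,T]}\frac{n^\gamma}{n^d}\sum_{\hat x\in\mathbb Z^d}\Big|\sum_{\hat y\in\mathbb Z^d}\big[G_s(\tfrac{\hat y}n)-G_s(\tfrac{\hat x}n)\big]\mathbb 1_{\{\{\hat x,\hat y\}\in\mathcal F\}}\mathbb 1_{\{|\hat y-\hat x|=1\}}\Big|.$$
   Context: Fix $T>0$. Bonds are unordered pairs $\{\hat x,\hat y\}$ of distinct sites of $\mathbb Z^d$; $\mathcal S=\{\{\hat x,\hat y\}:x_d<0\le y_d\}$ and $\mathcal F$ is the set of bonds not in $\mathcal S$. Test functions: $C^{1,2}$ = functions on $[0,T]\times\mathbb R^d$ continuously differentiable in time and twice in space; $C^{1,2}_c$ those with compact support; $S^{1,2}$ those $G\in C^{1,2}$ with $\partial_sG_s$ twice continuously differentiable in space and $\sup_s\sup_{\hat u}|\hat u|^k\sum_{H\in\{G_s,\partial_sG_s\}}(|H|+\sum_j|\partial_jH|+\sum_{i,j}|\partial_{ij}H|)<\infty$ for all $k\in\mathbb N$. $S^d_\gamma=C^{1,2}_c$ if $\gamma\in(0,1]$ or $d\ge2$; $S^{1,2}([0,T]\times\mathbb R)$ if $d=1,\gamma\in(1,2)$. $S^d_{\gamma,0}$: functions $G$ with $G_t(\hat u)=\mathbb 1_{u_d<0}G^-_t(\hat u)+\mathbb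 1_{u_d\ge0}G^+_t(\hat u)$ for all $t,\hat u$, for some $G^\pm\in S^d_\gamma$. *)

theory Defs
  imports "HOL-Analysis.Analysis"
begin

text \<open>Space R^d is modelled as (real,'d) vec with 'd a finite linearly ordered index type;
 the distinguished coordinate u_d is the one with the greatest index.\<close>

definition lastc :: "'d::{finite,linorder}" where
  "lastc = Max UNIV"

definition Zd :: "((real,'d::finite) vec) set" where
  "Zd = {x. \<forall>i. x $ i \<in> \<int>}"

definition bondS :: "(real,'d::{finite,linorder}) vec \<Rightarrow> (real,'d) vec \<Rightarrow> bool" where
  "bondS x y \<longleftrightarrow> (x $ lastc < 0 \<and> 0 \<le> y $ lastc) \<or> (y $ lastc < 0 \<and> 0 \<le> x $ lastc)"

definition bondF :: "(real,'d::{finite,linorder}) vec \<Rightarrow> (real,'d) vec \<Rightarrow> bool" where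
  "bondF x y \<longleftrightarrow> x \<noteq> y \<and> \<not> bondS x y"

definition has_partials2 ::
  "((real,'d::finite) vec \<Rightarrow> real) \<Rightarrow> ('d \<Rightarrow> (real,'d) vec \<Rightarrow> real) \<Rightarrow> ('d \<Rightarrow> 'd \<Rightarrow> (real,'d) vec \<Rightarrow> real) \<Rightarrow> bool" where
  "has_partials2 H D1 D2 \<longleftrightarrow>
     (\<forall>u j. ((\<lambda>h. H (u + h *\<^sub>R axis j 1)) has_real_derivative D1 j u) (at 0)) \<and>
     (\<forall>u i j. ((\<lambda>h. D1 j (u + h *\<^sub>R axis i 1)) has_real_derivative D2 i j u) (at 0))"

definition jcont :: "real \<Rightarrow> (real \<Rightarrow> (real,'d::finite) vec \<Rightarrow> real) \<Rightarrow> bool" where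
  "jcont T F \<longleftrightarrow> continuous_on ({0..T} \<times> UNIV) (\<lambda>(s,u). F s u)"

definition C12_with ::
  "real \<Rightarrow> (real \<Rightarrow> (real,'d::finite) vec \<Rightarrow> real) \<Rightarrow> (real \<Rightarrow> (real,'d) vec \<Rightarrow> real)
    \<Rightarrow> (real \<Rightarrow> 'd \<Rightarrow> (real,'d) vec \<Rightarrow> real) \<Rightarrow> (real \<Rightarrow> 'd \<Rightarrow> 'd \<Rightarrow> (real,'d) vec \<Rightarrow> real) \<Rightarrow> bool" where
  "C12_with T G Gt D1 D2 \<longleftrightarrow>
     (\<forall>s\<in>{0..T}. \<forall>u. ((\<lambda>t. G t u) has_real_derivative Gt s u) (at s within {0..T})) \<and>
     (\<forall>s\<in>{0..T}. has_partials2 (G s) (D1 s) (D2 s)) \<and>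
     jcont T G \<and> jcont T Gt \<and> (\<forall>j. jcont T (\<lambda>s. D1 s j)) \<and> (\<forall>i j. jcont T (\<lambda>s. D2 s i j))"

definition C12 :: "real \<Rightarrow> (real \<Rightarrow> (real,'d::finite) vec \<Rightarrow> real) \<Rightarrow> bool" where
  "C12 T G \<longleftrightarrow> (\<exists>Gt D1 D2. C12_with T G Gt D1 D2)"

definition C12c :: "real \<Rightarrow> (real \<Rightarrow> (real,'d::finite) vec \<Rightarrow> real) \<Rightarrow> bool" where
  "C12c T G \<longleftrightarrow> C12 T G \<and> (\<exists>R. \<forall>s\<in>{0..T}. \<forall>u. R < norm u \<longrightarrow> G s u = 0)"

definition S12 :: "real \<Rightarrow> (real \<Rightarrow> (real,'d::finite) vec \<Rightarrow> real) \<Rightarrow> bool" where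
  "S12 T G \<longleftrightarrow> (\<exists>Gt D1 D2 E1 E2.
     C12_with T G Gt D1 D2 \<and>
     (\<forall>s\<in>{0..T}. has_partials2 (Gt s) (E1 s) (E2 s)) \<and>
     (\<forall>j. jcont T (\<lambda>s. E1 s j)) \<and> (\<forall>i j. jcont T (\<lambda>s. E2 s i j)) \<and>
     (\<forall>k::nat. \<exists>C. \<forall>s\<in>{0..T}. \<forall>u.
        norm u ^ k *
          ((\<bar>G s u\<bar> + (\<Sum>j\<in>UNIV. \<bar>D1 s j u\<bar>) + (\<Sum>i\<in>UNIV. \<Sum>j\<in>UNIV. \<bar>D2 s i j u\<bar>)) +
           (\<bar>Gt s u\<bar> + (\<Sum>j\<in>UNIV. \<bar>E1 s j u\<bar>) + (\<Sum>i\<in>UNIV. \<Sum>j\<in>UNIV. \<bar>E2 s i j u\<bar>)))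
        \<le> C))"

definition S_gamma :: "real \<Rightarrow> real \<Rightarrow> (real \<Rightarrow> (real,'d::finite) vec \<Rightarrow> real) \<Rightarrow> bool" where
  "S_gamma T \<gamma> G \<longleftrightarrow>
     (if \<gamma> \<le> 1 \<or> CARD('d) \<ge> 2 then C12c T G else S12 T G)"

definition S_gamma0 :: "real \<Rightarrow> real \<Rightarrow> (real \<Rightarrow> (real,'d::{finite,linorder}) vec \<Rightarrow> real) \<Rightarrow> bool" where
  "S_gamma0 T \<gamma> G \<longleftrightarrow> (\<exists>Gm Gp. S_gamma T \<gamma> Gm \<and> S_gamma T \<gamma> Gp \<and>
     (\<forall>t\<in>{0..T}. \<forall>u. G t u = (if u $ lastc < 0 then Gm t u else Gp t u)))"

text \<open>Y^n_SEP(G), valued in [0,\<infinity>] (series of nonnegative terms).\<close>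
definition Y_SEP :: "real \<Rightarrow> real \<Rightarrow> (real \<Rightarrow> (real,'d::{finite,linorder}) vec \<Rightarrow> real) \<Rightarrow> nat \<Rightarrow> ennreal" where
  "Y_SEP T \<gamma> G n = (SUP s\<in>{0..T}.
     ennreal (real n powr \<gamma> / real n ^ CARD('d)) *
     (\<Sum>\<^sub>\<infinity>x\<in>Zd. ennreal \<bar>\<Sum>y\<in>{y\<in>Zd. norm (y - x) = 1}.
        (G s ((1 / real n) *\<^sub>R y) - G s ((1 / real n) *\<^sub>R x)) * (if bondF x y then 1 else 0)\<bar>))"

end

theory Submission
  imports Defs
begin

(*
  The inner sum of Y_SEP at a site x only involves bonds of F, which never cross the hyperplane
  u_d = 0 separating the two smooth pieces of G, so it can be computed with the piece on the side
  of x. Along each axis, the mean value theorem bounds the contribution of the two bonds by 2A/n^2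
  when both are present (a second difference), where A bounds the first and second partials of the
  piece near x/n. If one of them is a slow bond, which happens only in the normal direction at
  sites with x_d in {-1, 0}, the contribution is still at most 2A/n. For compactly supported
  pieces, O(n^d) sites contribute O(n^-2) and O(n^(d-1)) interface sites contribute O(n^-1); in
  dimension one the partials only decay like (1 + |u|^2)^-1, and the resulting weights sum to O(n)
  by comparison with a telescoping series. Either way the sum over x is O(n^(d-2)) uniformly in
  time, so Y^n <= K n^(gamma - 2), which tends to 0 because gamma < 2.
*)

lemma first_difference_bound:
  fixes f f' :: "real \<Rightarrow> real"
  assumes f': "\<And>t. (f has_real_derivative f' t) (at t)"
    and bound: "\<And>t. \<bar>t\<bar> \<le> \<bar>h\<bar> \<Longrightarrow> \<bar>f' t\<bar> \<le> A"
  shows "\<bar>f h - f 0\<bar> \<le> \<bar>h\<bar> * A"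
proof -
  obtain z where z: "\<bar>z\<bar> \<le> \<bar>h\<bar>" and mvt: "f h - f 0 = h * f' z"
  proof (cases h "0::real" rule: linorder_cases)
    case less
    with MVT2[of h 0 f f'] f' obtain z where "h < z" "z < 0" "f 0 - f h = (0 - h) * f' z" by blast
    then show ?thesis by (intro that[of z]) auto
  next
    case greater
    with MVT2[of 0 h f f'] f' obtain z where "0 < z" "z < h" "f h - f 0 = (h - 0) * f' z" by blast
    then show ?thesis by (intro that[of z]) auto
  qed (use that[of 0] in simp)
  show ?thesis
    unfolding mvt abs_mult by (rule mult_left_mono[OF bound[OF z]]) simp
qed

lemma second_difference_bound:
  fixes f f' f'' :: "real \<Rightarrow> real"
  assumes f': "\<And>t. (f has_real_derivative f' t) (at t)"
    and f'': "\<And>t. (f' has_real_derivative f'' t) (at t)"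
    and bound: "\<And>t. \<bar>t\<bar> \<le> \<bar>h\<bar> \<Longrightarrow> \<bar>f'' t\<bar> \<le> A"
  shows "\<bar>f h + f (- h) - 2 * f 0\<bar> \<le> 2 * h\<^sup>2 * A"
proof -
  define g where "g t = f t + f (- t) - 2 * f 0" for t
  have g': "(g has_real_derivative f' t - f' (- t)) (at t)" for t
    unfolding g_def using f' DERIV_mirror[of f "f' (- t)" t, symmetric]
    by (auto intro!: derivative_eq_intros)
  have "\<bar>f' t - f' (- t)\<bar> \<le> \<bar>h\<bar> * (2 * A)" if "\<bar>t\<bar> \<le> \<bar>h\<bar>" for t
  proof -
    have "A \<ge> 0" using bound[of 0] by simp
    have "\<bar>f' s - f' 0\<bar> \<le> \<bar>h\<bar> * A" if "\<bar>s\<bar> \<le> \<bar>h\<bar>" for s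
    proof -
      have "\<bar>f' s - f' 0\<bar> \<le> \<bar>s\<bar> * A"
        by (rule first_difference_bound[OF f'']) (use bound that in auto)
      also have "\<dots> \<le> \<bar>h\<bar> * A" using that \<open>A \<ge> 0\<close> by (rule mult_right_mono)
      finally show ?thesis .
    qed
    from this[of t] this[of "- t"] that show ?thesis by simp
  qed
  then have "\<bar>g h - g 0\<bar> \<le> \<bar>h\<bar> * (\<bar>h\<bar> * (2 * A))"
    by (rule first_difference_bound[OF g'])
  then show ?thesis by (simp add: g_def power2_eq_square)
qed

lemma DERIV_along_line:
  fixes F :: "'a::real_normed_vector \<Rightarrow> real"
  assumes "\<And>v. ((\<lambda>k. F (v + k *\<^sub>R e)) has_real_derivative F' v) (at 0)"
  shows "((\<lambda>t. F (u + t *\<^sub>R e)) has_real_derivative F' (u + t *\<^sub>R e)) (at t)"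
proof -
  have "((\<lambda>k. F (u + (k + t) *\<^sub>R e)) has_real_derivative F' (u + t *\<^sub>R e)) (at 0)"
  proof -
    have "u + (k + t) *\<^sub>R e = (u + t *\<^sub>R e) + k *\<^sub>R e" for k
      by (simp add: scaleR_left_distrib algebra_simps)
    then show ?thesis using assms[of "u + t *\<^sub>R e"] by (simp only:)
  qed
  then show ?thesis
    using DERIV_shift[of "\<lambda>t. F (u + t *\<^sub>R e)" _ 0 t] by simp
qed

lemma axis_differences_bound:
  assumes H: "has_partials2 H D1 D2"
    and bound: "\<And>t. \<bar>t\<bar> \<le> \<bar>h\<bar> \<Longrightarrow>
      \<bar>D1 i (u + t *\<^sub>R axis i 1)\<bar> \<le> A \<and> \<bar>D2 i i (u + t *\<^sub>R axis i 1)\<bar> \<le> A"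
  shows "\<bar>H (u + h *\<^sub>R axis i 1) - H u\<bar> \<le> \<bar>h\<bar> * A"
    and "\<bar>H (u + h *\<^sub>R axis i 1) + H (u - h *\<^sub>R axis i 1) - 2 * H u\<bar> \<le> 2 * h\<^sup>2 * A"
proof -
  have H': "((\<lambda>t. H (u + t *\<^sub>R axis i 1)) has_real_derivative D1 i (u + t *\<^sub>R axis i 1)) (at t)"
    and H'': "((\<lambda>t. D1 i (u + t *\<^sub>R axis i 1)) has_real_derivative D2 i i (u + t *\<^sub>R axis i 1)) (at t)"
    for t using H unfolding has_partials2_def by (blast intro: DERIV_along_line)+
  show "\<bar>H (u + h *\<^sub>R axis i 1) - H u\<bar> \<le> \<bar>h\<bar> * A"
    using first_difference_bound[OF H', of h A] bound by simp
  show "\<bar>H (u + h *\<^sub>R axis i 1) + H (u - h *\<^sub>R axis i 1) - 2 * H u\<bar> \<le> 2 * h\<^sup>2 * A"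
    using second_difference_bound[OF H' H'', of h A] bound by simp
qed

lemma Zd_add: "x \<in> Zd \<Longrightarrow> y \<in> Zd \<Longrightarrow> x + y \<in> Zd"
  and Zd_diff: "x \<in> Zd \<Longrightarrow> y \<in> Zd \<Longrightarrow> x - y \<in> Zd"
  and axis_in_Zd: "axis i 1 \<in> Zd"
  by (auto simp: Zd_def axis_def)

lemma Zd_norm_eq_1_cases:
  fixes z :: "(real,'d::finite) vec"
  assumes z: "z \<in> Zd" and norm: "norm z = 1"
  obtains i where "z = axis i 1 \<or> z = - axis i 1"
proof -
  have squares: "(\<Sum>j\<in>UNIV. z$j * z$j) = 1"
    using norm by (simp add: norm_eq_1 inner_vec_def)
  have "z \<noteq> 0" using norm by auto
  then obtain i where i: "z$i \<noteq> 0" by (auto simp: vec_eq_iff)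
  have "1 \<le> \<bar>z$i\<bar>"
    using z i by (intro Ints_nonzero_abs_ge1) (auto simp: Zd_def)
  then have "1 \<le> z$i * z$i"
    using power_mono[of 1 "\<bar>z$i\<bar>" 2] by (simp add: power2_eq_square)
  moreover have "(\<Sum>j\<in>UNIV. z$j * z$j) = z$i * z$i + (\<Sum>j\<in>UNIV-{i}. z$j * z$j)"
    by (simp add: sum.remove)
  moreover have "0 \<le> (\<Sum>j\<in>UNIV-{i}. z$j * z$j)"
    by (simp add: sum_nonneg)
  ultimately have "z$i * z$i = 1" and "(\<Sum>j\<in>UNIV-{i}. z$j * z$j) = 0"
    using squares by linarith+
  then have "z$i = 1 \<or> z$i = -1" and "\<forall>j\<in>UNIV-{i}. z$j = 0"
    by (auto simp: square_eq_1_iff sum_nonneg_eq_0_iff)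
  then have "z = axis i 1 \<or> z = - axis i 1"
    by (auto simp: vec_eq_iff axis_def)
  then show thesis by (rule that)
qed

lemma Zd_neighbours:
  fixes x :: "(real,'d::finite) vec"
  assumes x: "x \<in> Zd"
  shows "{y\<in>Zd. norm (y - x) = 1} = range (\<lambda>i. x + axis i 1) \<union> range (\<lambda>i. x - axis i 1)"
proof (intro equalityI subsetI)
  fix y assume y: "y \<in> {y\<in>Zd. norm (y - x) = 1}"
  then obtain i where "y - x = axis i 1 \<or> y - x = - axis i 1"
    using x Zd_diff Zd_norm_eq_1_cases[of "y - x"] by blast
  then show "y \<in> range (\<lambda>i. x + axis i 1) \<union> range (\<lambda>i. x - axis i 1)"
    by (auto simp: algebra_simps)
qed (use x axis_in_Zd in \<open>auto intro: Zd_add Zd_diff\<close>)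

lemma sum_Zd_neighbours:
  fixes x :: "(real,'d::finite) vec"
  assumes x: "x \<in> Zd"
  shows "(\<Sum>y\<in>{y\<in>Zd. norm (y - x) = 1}. f y) = (\<Sum>i\<in>UNIV. f (x + axis i 1) + f (x - axis i 1))"
proof -
  have "inj (\<lambda>i. x + axis i (1::real))" "inj (\<lambda>i. x - axis i (1::real))"
    by (auto intro!: injI simp: axis_eq_axis)
  moreover have "x + axis i 1 \<noteq> x - axis j (1::real)" for i j
  proof
    assume "x + axis i 1 = x - axis j (1::real)"
    then have "(x + axis i 1) $ i = (x - axis j (1::real)) $ i" by simp
    then show False by (simp add: axis_def split: if_splits)
  qed
  then have "range (\<lambda>i. x + axis i 1) \<inter> range (\<lambda>i. x - axis i (1::real)) = {}"
    by blast
  ultimately show ?thesis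
    unfolding Zd_neighbours[OF x] by (simp add: sum.union_disjoint sum.reindex sum.distrib)
qed

definition laplacian_F :: "((real,'d::{finite,linorder}) vec \<Rightarrow> real) \<Rightarrow> nat \<Rightarrow> (real,'d) vec \<Rightarrow> real"
  where "laplacian_F g n x = (\<Sum>y\<in>{y\<in>Zd. norm (y - x) = 1}.
     (g ((1 / real n) *\<^sub>R y) - g ((1 / real n) *\<^sub>R x)) * (if bondF x y then 1 else 0))"

lemma bondF_same_side: "bondF x y \<Longrightarrow> y $ lastc < 0 \<longleftrightarrow> x $ lastc < 0"
  by (auto simp: bondF_def bondS_def)

lemma laplacian_F_piecewise:
  assumes "n > 0"
  shows "laplacian_F (\<lambda>u. if u $ lastc < 0 then Hm u else Hp u) n x
       = laplacian_F (if x $ lastc < 0 then Hm else Hp) n x"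
proof -
  have "((1 / real n) *\<^sub>R y) $ lastc < 0 \<longleftrightarrow> y $ lastc < 0" for y :: "(real,'d::{finite,linorder}) vec"
    using assms by (simp add: divide_less_0_iff)
  then show ?thesis
    unfolding laplacian_F_def by (intro sum.cong) (auto dest: bondF_same_side)
qed

lemma bondS_axis_neighbour:
  assumes "x \<in> Zd" and "bondS x (x + axis i 1) \<or> bondS x (x - axis i 1)"
  shows "i = lastc \<and> (x $ lastc = 0 \<or> x $ lastc = -1)"
proof -
  obtain k where "x $ lastc = of_int k"
    using assms(1) by (auto simp: Zd_def elim: Ints_cases)
  then show ?thesis
    using assms(2) by (auto simp: bondS_def axis_def split: if_splits)
qed

lemma axis_pair_bound:
  fixes H :: "(real,'d::{finite,linorder}) vec \<Rightarrow> real"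
  assumes H: "has_partials2 H D1 D2" and h: "0 < h" and x: "x \<in> Zd"
    and line: "\<And>t. \<bar>t\<bar> \<le> \<bar>h\<bar> \<Longrightarrow>
      \<bar>D1 i (h *\<^sub>R x + t *\<^sub>R axis i 1)\<bar> \<le> A \<and> \<bar>D2 i i (h *\<^sub>R x + t *\<^sub>R axis i 1)\<bar> \<le> A"
  shows "\<bar>(H (h *\<^sub>R (x + axis i 1)) - H (h *\<^sub>R x)) * (if bondF x (x + axis i 1) then 1 else 0)
      + (H (h *\<^sub>R (x - axis i 1)) - H (h *\<^sub>R x)) * (if bondF x (x - axis i 1) then 1 else 0)\<bar>
    \<le> 2 * h\<^sup>2 * A + (if i = lastc \<and> (x $ lastc = 0 \<or> x $ lastc = -1) then 2 * h * A else 0)"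
    (is "\<bar>?E\<bar> \<le> 2 * h\<^sup>2 * A + ?boundary_term")
proof -
  define u where "u = h *\<^sub>R x"
  have "\<bar>D1 i u\<bar> \<le> A" using line[of 0] by (simp add: u_def)
  then have "A \<ge> 0" by (meson abs_ge_zero order_trans)
  have shift: "h *\<^sub>R (x + axis i 1) = u + h *\<^sub>R axis i 1" "h *\<^sub>R (x - axis i 1) = u - h *\<^sub>R axis i 1"
    by (simp_all add: u_def algebra_simps)
  have diffs: "\<bar>H (u + h *\<^sub>R axis i 1) - H u\<bar> \<le> h * A"
      "\<bar>H (u - h *\<^sub>R axis i 1) - H u\<bar> \<le> h * A"
      "\<bar>H (u + h *\<^sub>R axis i 1) + H (u - h *\<^sub>R axis i 1) - 2 * H u\<bar> \<le> 2 * h\<^sup>2 * A"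
    using axis_differences_bound[OF H, of h i u A] axis_differences_bound[OF H, of "- h" i u A]
      line h by (auto simp: u_def)
  show ?thesis
  proof (cases "bondF x (x + axis i 1) \<and> bondF x (x - axis i 1)")
    case True
    then have "?E = H (u + h *\<^sub>R axis i 1) + H (u - h *\<^sub>R axis i 1) - 2 * H u"
      by (simp add: shift u_def[symmetric])
    moreover have "0 \<le> ?boundary_term"
      using \<open>A \<ge> 0\<close> h by simp
    ultimately show ?thesis
      using diffs(3) by linarith
  next
    case False
    have "x \<noteq> x + axis i 1" "x \<noteq> x - axis i 1"
      by (simp_all add: axis_eq_0_iff)
    then have "?boundary_term = 2 * h * A"
      using False bondS_axis_neighbour[OF x] by (auto simp: bondF_def)
    moreover have "\<bar>?E\<bar> \<le> \<bar>H (u + h *\<^sub>R axis i 1) - H u\<bar> + \<bar>H (u - h *\<^sub>R axis i 1) - H u\<bar>"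
      unfolding shift u_def[symmetric] by simp linarith
    moreover have "0 \<le> 2 * h\<^sup>2 * A"
      using \<open>A \<ge> 0\<close> by simp
    ultimately show ?thesis
      using diffs(1,2) by linarith
  qed
qed

lemma laplacian_F_smooth_bound:
  fixes H :: "(real,'d::{finite,linorder}) vec \<Rightarrow> real"
  assumes H: "has_partials2 H D1 D2" and n: "n > 0" and x: "x \<in> Zd"
    and bound: "\<And>v i. norm (v - (1 / real n) *\<^sub>R x) \<le> 1 / real n \<Longrightarrow>
      \<bar>D1 i v\<bar> \<le> A \<and> \<bar>D2 i i v\<bar> \<le> A"
  shows "\<bar>laplacian_F H n x\<bar> \<le> real CARD('d) * (2 * A / (real n)\<^sup>2)
     + (if x $ lastc = 0 \<or> x $ lastc = -1 then 2 * A / real n else 0)"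
proof -
  define h where "h = 1 / real n"
  define F where "F y = (if bondF x y then 1 else 0 :: real)" for y
  define E where "E i = (H (h *\<^sub>R (x + axis i 1)) - H (h *\<^sub>R x)) * F (x + axis i 1)
      + (H (h *\<^sub>R (x - axis i 1)) - H (h *\<^sub>R x)) * F (x - axis i 1)" for i
  have h: "h > 0" using n by (simp add: h_def)
  have "\<bar>laplacian_F H n x\<bar> = \<bar>\<Sum>i\<in>UNIV. E i\<bar>"
    unfolding laplacian_F_def sum_Zd_neighbours[OF x] by (simp add: h_def E_def F_def)
  also have "\<dots> \<le> (\<Sum>i\<in>UNIV. \<bar>E i\<bar>)"
    by (rule sum_abs)
  also have "\<dots> \<le> (\<Sum>i::'d\<in>UNIV.
      2 * h\<^sup>2 * A + (if i = lastc \<and> (x $ lastc = 0 \<or> x $ lastc = -1) then 2 * h * A else 0))"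
    unfolding E_def F_def
    by (intro sum_mono axis_pair_bound[OF H h x]) (use bound in \<open>simp add: h_def\<close>)
  also have "\<dots> = real CARD('d) * (2 * A / (real n)\<^sup>2)
      + (if x $ lastc = 0 \<or> x $ lastc = -1 then 2 * A / real n else 0)"
    by (simp add: sum.distrib h_def power_divide)
  finally show ?thesis .
qed

lemma laplacian_F_piecewise_bound:
  fixes Hm Hp :: "(real,'d::{finite,linorder}) vec \<Rightarrow> real"
  assumes Hm: "has_partials2 Hm D1m D2m" and Hp: "has_partials2 Hp D1p D2p"
    and n: "n > 0" and x: "x \<in> Zd"
    and bound: "\<And>v i. norm (v - (1 / real n) *\<^sub>R x) \<le> 1 / real n \<Longrightarrow>
      \<bar>D1m i v\<bar> \<le> A \<and> \<bar>D2m i i v\<bar> \<le> A \<and> \<bar>D1p i v\<bar> \<le> A \<and> \<bar>D2p i i v\<bar> \<le> A"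
  shows "\<bar>laplacian_F (\<lambda>u. if u $ lastc < 0 then Hm u else Hp u) n x\<bar>
    \<le> real CARD('d) * (2 * A / (real n)\<^sup>2)
      + (if x $ lastc = 0 \<or> x $ lastc = -1 then 2 * A / real n else 0)"
proof -
  have H: "has_partials2 (if x $ lastc < 0 then Hm else Hp)
      (if x $ lastc < 0 then D1m else D1p) (if x $ lastc < 0 then D2m else D2p)"
    using Hm Hp by simp
  show ?thesis
    unfolding laplacian_F_piecewise[OF n]
    by (rule laplacian_F_smooth_bound[OF H n x]) (use bound in auto)
qed

lemma card_Zd_box_le:
  fixes B :: "'d::finite \<Rightarrow> int set" and S :: "(real,'d) vec set"
  assumes B: "\<And>j. finite (B j)" and S: "S \<subseteq> {x. \<forall>j. x $ j \<in> real_of_int ` B j}"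
  shows "finite S" and "card S \<le> (\<Prod>j\<in>UNIV. card (B j))"
proof -
  have sub: "S \<subseteq> (\<lambda>f. \<chi> j. real_of_int (f j)) ` PiE UNIV B"
  proof
    fix x assume "x \<in> S"
    then have "x $ j \<in> real_of_int ` B j" for j
      using S by blast
    then have k: "\<lfloor>x $ j\<rfloor> \<in> B j" "real_of_int \<lfloor>x $ j\<rfloor> = x $ j" for j
      by (metis floor_of_int image_iff)+
    then have "x = (\<lambda>f. \<chi> j. real_of_int (f j)) (\<lambda>j. \<lfloor>x $ j\<rfloor>)" and "(\<lambda>j. \<lfloor>x $ j\<rfloor>) \<in> PiE UNIV B"
      by (auto simp: vec_eq_iff k(2))
    then show "x \<in> (\<lambda>f. \<chi> j. real_of_int (f j)) ` PiE UNIV B"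
      by (rule image_eqI)
  qed
  moreover have fin: "finite (PiE UNIV B)"
    using B by (simp add: finite_PiE)
  ultimately show "finite S"
    by (blast intro: finite_subset)
  have "card S \<le> card ((\<lambda>f. \<chi> j. real_of_int (f j)) ` PiE UNIV B)"
    using sub fin by (intro card_mono) auto
  also have "\<dots> \<le> card (PiE UNIV B)"
    using fin by (rule card_image_le)
  finally show "card S \<le> (\<Prod>j\<in>UNIV. card (B j))"
    by (simp add: card_PiE)
qed

lemma Ints_abs_le_in_range:
  assumes "t \<in> \<int>" and "\<bar>t\<bar> \<le> r"
  shows "t \<in> real_of_int ` {-\<lfloor>r\<rfloor>..\<lfloor>r\<rfloor>}"
proof -
  obtain k where "t = of_int k" using assms(1) by (auto elim: Ints_cases)
  moreover have "\<bar>k\<bar> \<le> \<lfloor>r\<rfloor>" using assms(2) calculation by (simp add: le_floor_iff)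
  ultimately show ?thesis
    by (intro image_eqI[of _ _ k]) auto
qed

lemma real_card_symmetric_range:
  assumes "0 \<le> r"
  shows "real (card {-\<lfloor>r\<rfloor>..\<lfloor>r\<rfloor>}) \<le> 2 * r + 1"
  using assms of_int_floor_le[of r] by simp

definition Zd_cube :: "real \<Rightarrow> (real,'d::finite) vec set"
  where "Zd_cube r = {x\<in>Zd. \<forall>j. \<bar>x $ j\<bar> \<le> r}"

(* The sites with a nearest-neighbour bond in bondS, restricted to a box parallel to the interface. *)
definition Zd_slab :: "real \<Rightarrow> (real,'d::{finite,linorder}) vec set"
  where "Zd_slab r = {x\<in>Zd. (\<forall>j. j \<noteq> lastc \<longrightarrow> \<bar>x $ j\<bar> \<le> r) \<and> (x $ lastc = 0 \<or> x $ lastc = -1)}"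

lemma card_Zd_cube:
  assumes "0 \<le> r"
  shows "finite (Zd_cube r :: (real,'d::finite) vec set)"
    and "real (card (Zd_cube r :: (real,'d) vec set)) \<le> (2 * r + 1) ^ CARD('d)"
proof -
  have "(Zd_cube r :: (real,'d) vec set) \<subseteq> {x. \<forall>j. x $ j \<in> real_of_int ` {-\<lfloor>r\<rfloor>..\<lfloor>r\<rfloor>}}"
    by (auto simp: Zd_cube_def Zd_def intro: Ints_abs_le_in_range)
  note box = card_Zd_box_le[OF _ this]
  show "finite (Zd_cube r :: (real,'d) vec set)"
    using box(1) by simp
  have "real (card (Zd_cube r :: (real,'d) vec set)) \<le> real (card {-\<lfloor>r\<rfloor>..\<lfloor>r\<rfloor>}) ^ CARD('d)"
    using box(2) by (simp flip: of_nat_power)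
  also have "\<dots> \<le> (2 * r + 1) ^ CARD('d)"
    using real_card_symmetric_range[OF assms] by (intro power_mono) simp_all
  finally show "real (card (Zd_cube r :: (real,'d) vec set)) \<le> (2 * r + 1) ^ CARD('d)" .
qed

lemma in_Zd_cube_if_scaled_norm_le:
  assumes "x \<in> Zd" and "0 < n" and "norm ((1 / n) *\<^sub>R x) \<le> \<rho>"
  shows "x \<in> Zd_cube (n * \<rho>)"
proof -
  have "\<bar>x $ j\<bar> \<le> n * \<rho>" for j
  proof -
    have "\<bar>x $ j\<bar> \<le> norm x" by (rule component_le_norm_cart)
    also have "\<dots> = n * norm ((1 / n) *\<^sub>R x)" using assms(2) by simp
    also have "\<dots> \<le> n * \<rho>" using assms(2,3) by (intro mult_left_mono) auto
    finally show ?thesis .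
  qed
  then show ?thesis
    using assms(1) by (simp add: Zd_cube_def)
qed

lemma card_Zd_slab:
  assumes "0 \<le> r"
  shows "finite (Zd_slab r :: (real,'d::{finite,linorder}) vec set)"
    and "real (card (Zd_slab r :: (real,'d) vec set)) \<le> 2 * (2 * r + 1) ^ (CARD('d) - 1)"
proof -
  define B :: "'d \<Rightarrow> int set" where "B j = (if j = lastc then {-1, 0} else {-\<lfloor>r\<rfloor>..\<lfloor>r\<rfloor>})" for j
  have finite_B: "finite (B j)" for j
    by (simp add: B_def)
  have "(Zd_slab r :: (real,'d) vec set) \<subseteq> {x. \<forall>j. x $ j \<in> real_of_int ` B j}"
    by (auto simp: Zd_slab_def Zd_def B_def intro: Ints_abs_le_in_range image_eqI[of _ _ "-1"])
  note box = card_Zd_box_le[OF finite_B this]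
  show "finite (Zd_slab r :: (real,'d) vec set)"
    using box(1) .
  have "(\<Prod>j\<in>UNIV. card (B j)) = card (B lastc) * (\<Prod>j\<in>UNIV - {lastc}. card (B j))"
    by (simp add: prod.remove)
  also have "\<dots> = 2 * card {-\<lfloor>r\<rfloor>..\<lfloor>r\<rfloor>} ^ (CARD('d) - 1)"
    by (simp add: B_def card_Diff_singleton)
  finally have "real (card (Zd_slab r :: (real,'d) vec set))
      \<le> real (2 * card {-\<lfloor>r\<rfloor>..\<lfloor>r\<rfloor>} ^ (CARD('d) - 1))"
    using box(2) by (simp only: of_nat_le_iff)
  also have "\<dots> = 2 * real (card {-\<lfloor>r\<rfloor>..\<lfloor>r\<rfloor>}) ^ (CARD('d) - 1)"
    by (simp only: of_nat_mult of_nat_power of_nat_numeral)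
  also have "\<dots> \<le> 2 * (2 * r + 1) ^ (CARD('d) - 1)"
    using real_card_symmetric_range[OF assms] by (intro mult_left_mono power_mono) simp_all
  finally show "real (card (Zd_slab r :: (real,'d) vec set)) \<le> 2 * (2 * r + 1) ^ (CARD('d) - 1)" .
qed

lemma sum_indicator_le_card:
  fixes c :: real
  assumes "finite A" "finite S" "0 \<le> c"
  shows "(\<Sum>x\<in>A. c * indicator S x) \<le> c * real (card S)"
proof -
  have "(\<Sum>x\<in>A. c * indicator S x) = (\<Sum>x\<in>A. if x \<in> S then c else 0)"
    by (rule sum.cong) (simp_all add: indicator_def)
  also have "\<dots> = (\<Sum>x\<in>A \<inter> S. c)"
    using assms(1) by (rule sum.inter_restrict[symmetric])
  also have "\<dots> = c * real (card (A \<inter> S))"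
    by (simp only: sum_constant mult.commute)
  also have "\<dots> \<le> c * real (card S)"
    using assms(2,3) by (intro mult_left_mono) (simp_all add: card_mono)
  finally show ?thesis .
qed

lemma jcont_bounded:
  fixes F :: "real \<Rightarrow> (real,'d::finite) vec \<Rightarrow> real"
  assumes "jcont T F"
  obtains M where "\<And>s v. s \<in> {0..T} \<Longrightarrow> norm v \<le> \<rho> \<Longrightarrow> \<bar>F s v\<bar> \<le> M"
proof -
  have "continuous_on ({0..T} \<times> cball 0 \<rho>) (\<lambda>(s, v). F s v)"
    using assms unfolding jcont_def by (rule continuous_on_subset) auto
  then have "compact ((\<lambda>(s, v). F s v) ` ({0..T} \<times> cball 0 \<rho>))"
    by (intro compact_continuous_image compact_Times compact_Icc compact_cball)
  then have "bounded ((\<lambda>(s, v). F s v) ` ({0..T} \<times> cball 0 \<rho>))"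
    by (rule compact_imp_bounded)
  then obtain M where M: "\<And>y. y \<in> (\<lambda>(s, v). F s v) ` ({0..T} \<times> cball 0 \<rho>) \<Longrightarrow> \<bar>y\<bar> \<le> M"
    unfolding bounded_iff real_norm_def by blast
  show thesis
  proof (rule that)
    fix s and v :: "(real,'d) vec"
    assume "s \<in> {0..T}" "norm v \<le> \<rho>"
    then show "\<bar>F s v\<bar> \<le> M"
      by (intro M image_eqI[of _ _ "(s, v)"]) auto
  qed
qed

lemma abs_le_sum_abs:
  fixes D :: "'i::finite \<Rightarrow> real"
  shows "\<bar>D i\<bar> \<le> (\<Sum>i\<in>UNIV. \<bar>D i\<bar>)"
  by (rule member_le_sum) auto

lemma abs_le_double_sum:
  fixes D :: "'i::finite \<Rightarrow> 'j::finite \<Rightarrow> real"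
  shows "\<bar>D i j\<bar> \<le> (\<Sum>i\<in>UNIV. \<Sum>j\<in>UNIV. \<bar>D i j\<bar>)"
proof -
  have "\<bar>D i j\<bar> \<le> (\<Sum>j\<in>UNIV. \<bar>D i j\<bar>)"
    by (rule member_le_sum) auto
  also have "\<dots> \<le> (\<Sum>i\<in>UNIV. \<Sum>j\<in>UNIV. \<bar>D i j\<bar>)"
    by (rule member_le_sum) (auto intro: sum_nonneg)
  finally show ?thesis .
qed

lemma C12c_partials_bounded:
  fixes H :: "real \<Rightarrow> (real,'d::finite) vec \<Rightarrow> real"
  assumes "C12c T H"
  obtains D1 D2 R where "\<And>s. s \<in> {0..T} \<Longrightarrow> has_partials2 (H s) (D1 s) (D2 s)"
    and "\<And>s u. s \<in> {0..T} \<Longrightarrow> R < norm u \<Longrightarrow> H s u = 0"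
    and "\<And>\<rho>. \<exists>M. \<forall>s\<in>{0..T}. \<forall>v. norm v \<le> \<rho> \<longrightarrow> (\<forall>i j. \<bar>D1 s j v\<bar> \<le> M \<and> \<bar>D2 s i j v\<bar> \<le> M)"
proof -
  obtain Gt D1 D2 R where C12: "C12_with T H Gt D1 D2"
    and support: "\<forall>s\<in>{0..T}. \<forall>u. R < norm u \<longrightarrow> H s u = 0"
    using assms unfolding C12c_def C12_def by blast
  define Q where "Q s v = (\<Sum>j\<in>UNIV. \<bar>D1 s j v\<bar>) + (\<Sum>i\<in>UNIV. \<Sum>j\<in>UNIV. \<bar>D2 s i j v\<bar>)" for s v
  have "jcont T Q"
    using C12 unfolding C12_with_def jcont_def Q_def case_prod_beta
    by (intro continuous_intros) auto
  have bounded: "\<exists>M. \<forall>s\<in>{0..T}. \<forall>v. norm v \<le> \<rho> \<longrightarrow> (\<forall>i j. \<bar>D1 s j v\<bar> \<le> M \<and> \<bar>D2 s i j v\<bar> \<le> M)"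
    for \<rho>
  proof -
    obtain M where M: "\<And>s v. s \<in> {0..T} \<Longrightarrow> norm v \<le> \<rho> \<Longrightarrow> \<bar>Q s v\<bar> \<le> M"
      using jcont_bounded[OF \<open>jcont T Q\<close>] by blast
    have "\<bar>D1 s j v\<bar> \<le> M \<and> \<bar>D2 s i j v\<bar> \<le> M" if "s \<in> {0..T}" "norm v \<le> \<rho>" for s v i j
    proof -
      have "0 \<le> (\<Sum>j\<in>UNIV. \<bar>D1 s j v\<bar>)" "0 \<le> (\<Sum>i\<in>UNIV. \<Sum>j\<in>UNIV. \<bar>D2 s i j v\<bar>)"
        by (simp_all add: sum_nonneg)
      then show ?thesis
        using M[OF that] abs_ge_self[of "Q s v"]
          abs_le_sum_abs[of "\<lambda>j. D1 s j v" j] abs_le_double_sum[of "\<lambda>i j. D2 s i j v" i j]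
        unfolding Q_def by linarith
    qed
    then show ?thesis
      by blast
  qed
  show thesis
  proof (rule that)
    show "has_partials2 (H s) (D1 s) (D2 s)" if "s \<in> {0..T}" for s
      using C12 that by (simp add: C12_with_def)
  qed (use support bounded in auto)
qed

lemma S12_partials_decay:
  fixes H :: "real \<Rightarrow> (real,'d::finite) vec \<Rightarrow> real"
  assumes "S12 T H"
  obtains D1 D2 C where "\<And>s. s \<in> {0..T} \<Longrightarrow> has_partials2 (H s) (D1 s) (D2 s)"
    and "\<And>s v i j. s \<in> {0..T} \<Longrightarrow>
      (1 + (norm v)\<^sup>2) * \<bar>D1 s j v\<bar> \<le> C \<and> (1 + (norm v)\<^sup>2) * \<bar>D2 s i j v\<bar> \<le> C"
proof -
  obtain Gt D1 D2 and E1 :: "real \<Rightarrow> 'd \<Rightarrow> (real,'d) vec \<Rightarrow> real"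
      and E2 :: "real \<Rightarrow> 'd \<Rightarrow> 'd \<Rightarrow> (real,'d) vec \<Rightarrow> real"
    where C12: "C12_with T H Gt D1 D2"
      and decay: "\<forall>k::nat. \<exists>C. \<forall>s\<in>{0..T}. \<forall>u. norm u ^ k *
        ((\<bar>H s u\<bar> + (\<Sum>j\<in>UNIV. \<bar>D1 s j u\<bar>) + (\<Sum>i\<in>UNIV. \<Sum>j\<in>UNIV. \<bar>D2 s i j u\<bar>)) +
         (\<bar>Gt s u\<bar> + (\<Sum>j\<in>UNIV. \<bar>E1 s j u\<bar>) + (\<Sum>i\<in>UNIV. \<Sum>j\<in>UNIV. \<bar>E2 s i j u\<bar>))) \<le> C"
    using assms unfolding S12_def by blast
  define P where "P s u = (\<bar>H s u\<bar> + (\<Sum>j\<in>UNIV. \<bar>D1 s j u\<bar>) + (\<Sum>i\<in>UNIV. \<Sum>j\<in>UNIV. \<bar>D2 s i j u\<bar>)) +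
         (\<bar>Gt s u\<bar> + (\<Sum>j\<in>UNIV. \<bar>E1 s j u\<bar>) + (\<Sum>i\<in>UNIV. \<Sum>j\<in>UNIV. \<bar>E2 s i j u\<bar>))" for s u
  obtain C0 where C0: "\<forall>s\<in>{0..T}. \<forall>u. P s u \<le> C0"
    using decay[rule_format, of 0] unfolding P_def by auto
  obtain C2 where C2: "\<forall>s\<in>{0..T}. \<forall>u. (norm u)\<^sup>2 * P s u \<le> C2"
    using decay[rule_format, of 2] unfolding P_def by auto
  have "(1 + (norm v)\<^sup>2) * \<bar>D1 s j v\<bar> \<le> C0 + C2 \<and> (1 + (norm v)\<^sup>2) * \<bar>D2 s i j v\<bar> \<le> C0 + C2"
    if s: "s \<in> {0..T}" for s v i j
  proof -
    have "\<bar>D1 s j v\<bar> \<le> P s v" "\<bar>D2 s i j v\<bar> \<le> P s v"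
    proof -
      have "0 \<le> (\<Sum>j\<in>UNIV. \<bar>D1 s j v\<bar>)" "0 \<le> (\<Sum>i\<in>UNIV. \<Sum>j\<in>UNIV. \<bar>D2 s i j v\<bar>)"
        "0 \<le> (\<Sum>j\<in>UNIV. \<bar>E1 s j v\<bar>)" "0 \<le> (\<Sum>i\<in>UNIV. \<Sum>j\<in>UNIV. \<bar>E2 s i j v\<bar>)"
        by (simp_all add: sum_nonneg)
      then show "\<bar>D1 s j v\<bar> \<le> P s v" "\<bar>D2 s i j v\<bar> \<le> P s v"
        using abs_le_sum_abs[of "\<lambda>j. D1 s j v" j] abs_le_double_sum[of "\<lambda>i j. D2 s i j v" i j]
          abs_ge_zero[of "H s v"] abs_ge_zero[of "Gt s v"]
        unfolding P_def by linarith+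
    qed
    moreover have "(1 + (norm v)\<^sup>2) * P s v \<le> C0 + C2"
      using C0 C2 s by (simp add: distrib_right add_mono)
    moreover have "0 \<le> 1 + (norm v)\<^sup>2"
      by simp
    ultimately show ?thesis
      using mult_left_mono[of "\<bar>D1 s j v\<bar>" "P s v" "1 + (norm v)\<^sup>2"]
        mult_left_mono[of "\<bar>D2 s i j v\<bar>" "P s v" "1 + (norm v)\<^sup>2"] by linarith
  qed
  moreover have "has_partials2 (H s) (D1 s) (D2 s)" if "s \<in> {0..T}" for s
    using C12 that by (simp add: C12_with_def)
  ultimately show thesis
    using that by blast
qed

lemma C12c_pair_bounds:
  fixes Gm Gp :: "real \<Rightarrow> (real,'d::finite) vec \<Rightarrow> real"
  assumes "C12c T Gm" and "C12c T Gp"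
  obtains R M D1m D2m D1p D2p where "0 \<le> R" and "0 \<le> M"
    and "\<And>s. s \<in> {0..T} \<Longrightarrow> has_partials2 (Gm s) (D1m s) (D2m s)"
    and "\<And>s. s \<in> {0..T} \<Longrightarrow> has_partials2 (Gp s) (D1p s) (D2p s)"
    and "\<And>s u. s \<in> {0..T} \<Longrightarrow> R < norm u \<Longrightarrow> Gm s u = 0 \<and> Gp s u = 0"
    and "\<And>s v i. s \<in> {0..T} \<Longrightarrow> norm v \<le> R + 2 \<Longrightarrow>
      \<bar>D1m s i v\<bar> \<le> M \<and> \<bar>D2m s i i v\<bar> \<le> M \<and> \<bar>D1p s i v\<bar> \<le> M \<and> \<bar>D2p s i i v\<bar> \<le> M"
proof -
  obtain D1m D2m Rm where pm: "\<And>s. s \<in> {0..T} \<Longrightarrow> has_partials2 (Gm s) (D1m s) (D2m s)"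
    and zm: "\<And>s u. s \<in> {0..T} \<Longrightarrow> Rm < norm u \<Longrightarrow> Gm s u = 0"
    and bm: "\<And>\<rho>. \<exists>M. \<forall>s\<in>{0..T}. \<forall>v. norm v \<le> \<rho> \<longrightarrow> (\<forall>i j. \<bar>D1m s j v\<bar> \<le> M \<and> \<bar>D2m s i j v\<bar> \<le> M)"
    using C12c_partials_bounded[OF assms(1)] by blast
  obtain D1p D2p Rp where pp: "\<And>s. s \<in> {0..T} \<Longrightarrow> has_partials2 (Gp s) (D1p s) (D2p s)"
    and zp: "\<And>s u. s \<in> {0..T} \<Longrightarrow> Rp < norm u \<Longrightarrow> Gp s u = 0"
    and bp: "\<And>\<rho>. \<exists>M. \<forall>s\<in>{0..T}. \<forall>v. norm v \<le> \<rho> \<longrightarrow> (\<forall>i j. \<bar>D1p s j v\<bar> \<le> M \<and> \<bar>D2p s i j v\<bar> \<le> M)"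
    using C12c_partials_bounded[OF assms(2)] by blast
  define R where "R = max (max Rm Rp) 0"
  obtain Mm Mp where
    Mm: "\<forall>s\<in>{0..T}. \<forall>v. norm v \<le> R + 2 \<longrightarrow> (\<forall>i j. \<bar>D1m s j v\<bar> \<le> Mm \<and> \<bar>D2m s i j v\<bar> \<le> Mm)" and
    Mp: "\<forall>s\<in>{0..T}. \<forall>v. norm v \<le> R + 2 \<longrightarrow> (\<forall>i j. \<bar>D1p s j v\<bar> \<le> Mp \<and> \<bar>D2p s i j v\<bar> \<le> Mp)"
    using bm bp by meson
  define M where "M = max (max Mm Mp) 0"
  show thesis
  proof (rule that[OF _ _ pm pp])
    show "0 \<le> R" "0 \<le> M" by (simp_all add: R_def M_def)
    show "Gm s u = 0 \<and> Gp s u = 0" if "s \<in> {0..T}" "R < norm u" for s u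
      using zm zp that by (simp add: R_def)
    fix s i and v :: "(real,'d) vec"
    assume "s \<in> {0..T}" "norm v \<le> R + 2"
    then have "\<bar>D1m s i v\<bar> \<le> Mm" "\<bar>D2m s i i v\<bar> \<le> Mm" "\<bar>D1p s i v\<bar> \<le> Mp" "\<bar>D2p s i i v\<bar> \<le> Mp"
      using Mm Mp by blast+
    then show "\<bar>D1m s i v\<bar> \<le> M \<and> \<bar>D2m s i i v\<bar> \<le> M \<and> \<bar>D1p s i v\<bar> \<le> M \<and> \<bar>D2p s i i v\<bar> \<le> M"
      by (simp add: M_def le_max_iff_disj)
  qed
qed

lemma S12_pair_decay:
  fixes Gm Gp :: "real \<Rightarrow> (real,'d::finite) vec \<Rightarrow> real"
  assumes "S12 T Gm" and "S12 T Gp"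
  obtains C D1m D2m D1p D2p where "0 \<le> C"
    and "\<And>s. s \<in> {0..T} \<Longrightarrow> has_partials2 (Gm s) (D1m s) (D2m s)"
    and "\<And>s. s \<in> {0..T} \<Longrightarrow> has_partials2 (Gp s) (D1p s) (D2p s)"
    and "\<And>s v i. s \<in> {0..T} \<Longrightarrow>
      (1 + (norm v)\<^sup>2) * \<bar>D1m s i v\<bar> \<le> C \<and> (1 + (norm v)\<^sup>2) * \<bar>D2m s i i v\<bar> \<le> C
      \<and> (1 + (norm v)\<^sup>2) * \<bar>D1p s i v\<bar> \<le> C \<and> (1 + (norm v)\<^sup>2) * \<bar>D2p s i i v\<bar> \<le> C"
proof -
  obtain D1m D2m Cm where pm: "\<And>s. s \<in> {0..T} \<Longrightarrow> has_partials2 (Gm s) (D1m s) (D2m s)"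
    and dm: "\<And>s v i j. s \<in> {0..T} \<Longrightarrow>
      (1 + (norm v)\<^sup>2) * \<bar>D1m s j v\<bar> \<le> Cm \<and> (1 + (norm v)\<^sup>2) * \<bar>D2m s i j v\<bar> \<le> Cm"
    using S12_partials_decay[OF assms(1)] by blast
  obtain D1p D2p Cp where pp: "\<And>s. s \<in> {0..T} \<Longrightarrow> has_partials2 (Gp s) (D1p s) (D2p s)"
    and dp: "\<And>s v i j. s \<in> {0..T} \<Longrightarrow>
      (1 + (norm v)\<^sup>2) * \<bar>D1p s j v\<bar> \<le> Cp \<and> (1 + (norm v)\<^sup>2) * \<bar>D2p s i j v\<bar> \<le> Cp"
    using S12_partials_decay[OF assms(2)] by blast
  show thesis
  proof (rule that[OF _ pm pp])
    show "0 \<le> max (max Cm Cp) 0" by simp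
    fix s i and v :: "(real,'d) vec"
    assume "s \<in> {0..T}"
    then show "(1 + (norm v)\<^sup>2) * \<bar>D1m s i v\<bar> \<le> max (max Cm Cp) 0
      \<and> (1 + (norm v)\<^sup>2) * \<bar>D2m s i i v\<bar> \<le> max (max Cm Cp) 0
      \<and> (1 + (norm v)\<^sup>2) * \<bar>D1p s i v\<bar> \<le> max (max Cm Cp) 0
      \<and> (1 + (norm v)\<^sup>2) * \<bar>D2p s i i v\<bar> \<le> max (max Cm Cp) 0"
      using dm[of s v i i] dp[of s v i i] by (simp add: le_max_iff_disj)
  qed
qed

definition laplacian_F_sums_le :: "real \<Rightarrow> (real \<Rightarrow> (real,'d::{finite,linorder}) vec \<Rightarrow> real) \<Rightarrow> real \<Rightarrow> bool"
  where "laplacian_F_sums_le T G K \<longleftrightarrow> (\<forall>n\<ge>1. \<forall>s\<in>{0..T}. \<forall>F. finite F \<longrightarrow> F \<subseteq> Zd \<longrightarrow>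
    (\<Sum>x\<in>F. \<bar>laplacian_F (G s) n x\<bar>) \<le> K * real n ^ CARD('d) / (real n)\<^sup>2)"

lemma laplacian_F_sums_le_cong:
  "(\<And>s. s \<in> {0..T} \<Longrightarrow> G s = G' s) \<Longrightarrow> laplacian_F_sums_le T G K \<longleftrightarrow> laplacian_F_sums_le T G' K"
  by (simp add: laplacian_F_sums_le_def)

lemma laplacian_F_eq_0_far:
  fixes g :: "(real,'d::{finite,linorder}) vec \<Rightarrow> real"
  assumes n: "n \<ge> 1" and zero: "\<And>u. R < norm u \<Longrightarrow> g u = 0"
    and far: "R + 1 < norm ((1 / real n) *\<^sub>R x)"
  shows "laplacian_F g n x = 0"
proof -
  have "R < norm ((1 / real n) *\<^sub>R y)" if "norm (y - x) = 1" for y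
  proof -
    have "norm ((1 / real n) *\<^sub>R x) \<le> norm ((1 / real n) *\<^sub>R y) + norm ((1 / real n) *\<^sub>R (y - x))"
      by (metis norm_minus_commute norm_triangle_sub scaleR_right_diff_distrib)
    moreover have "norm ((1 / real n) *\<^sub>R (y - x)) \<le> 1"
      using n that by simp
    ultimately show ?thesis using far by linarith
  qed
  moreover have "R < norm ((1 / real n) *\<^sub>R x)"
    using far by linarith
  ultimately show ?thesis
    unfolding laplacian_F_def using zero by (intro sum.neutral) auto
qed

lemma laplacian_F_compact_pointwise:
  fixes Hm Hp :: "(real,'d::{finite,linorder}) vec \<Rightarrow> real"
  assumes Hm: "has_partials2 Hm D1m D2m" and Hp: "has_partials2 Hp D1p D2p"
    and n: "n \<ge> 1" and x: "x \<in> Zd" and "0 \<le> R" "0 \<le> M"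
    and zero: "\<And>u. R < norm u \<Longrightarrow> Hm u = 0 \<and> Hp u = 0"
    and bound: "\<And>v i. norm v \<le> R + 2 \<Longrightarrow>
      \<bar>D1m i v\<bar> \<le> M \<and> \<bar>D2m i i v\<bar> \<le> M \<and> \<bar>D1p i v\<bar> \<le> M \<and> \<bar>D2p i i v\<bar> \<le> M"
  shows "\<bar>laplacian_F (\<lambda>u. if u $ lastc < 0 then Hm u else Hp u) n x\<bar>
    \<le> real CARD('d) * (2 * M / (real n)\<^sup>2) * indicator (Zd_cube (real n * (R + 1))) x
      + 2 * M / real n * indicator (Zd_slab (real n * (R + 1))) x"
proof (cases "norm ((1 / real n) *\<^sub>R x) \<le> R + 1")
  case True
  have cube: "x \<in> Zd_cube (real n * (R + 1))"
    using x n True by (intro in_Zd_cube_if_scaled_norm_le) auto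
  then have slab: "x $ lastc = 0 \<or> x $ lastc = -1 \<Longrightarrow> x \<in> Zd_slab (real n * (R + 1))"
    by (auto simp: Zd_cube_def Zd_slab_def)
  have "1 / real n \<le> 1"
    using n by simp
  have near: "norm v \<le> R + 2" if "norm (v - (1 / real n) *\<^sub>R x) \<le> 1 / real n" for v
  proof -
    have "norm v \<le> norm ((1 / real n) *\<^sub>R x) + norm (v - (1 / real n) *\<^sub>R x)"
      by (rule norm_triangle_sub)
    also have "\<dots> \<le> R + 2"
      using True that \<open>1 / real n \<le> 1\<close> by linarith
    finally show ?thesis .
  qed
  have "\<bar>laplacian_F (\<lambda>u. if u $ lastc < 0 then Hm u else Hp u) n x\<bar>
      \<le> real CARD('d) * (2 * M / (real n)\<^sup>2)
        + (if x $ lastc = 0 \<or> x $ lastc = -1 then 2 * M / real n else 0)"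
    using n x bound near by (intro laplacian_F_piecewise_bound[OF Hm Hp]) auto
  moreover have "(if x $ lastc = 0 \<or> x $ lastc = -1 then 2 * M / real n else 0)
      \<le> 2 * M / real n * indicator (Zd_slab (real n * (R + 1))) x"
    using slab \<open>0 \<le> M\<close> by (auto simp: indicator_def)
  moreover have "real CARD('d) * (2 * M / (real n)\<^sup>2) * indicator (Zd_cube (real n * (R + 1))) x
      = real CARD('d) * (2 * M / (real n)\<^sup>2)"
    using cube by simp
  ultimately show ?thesis
    by linarith
next
  case False
  have "laplacian_F (\<lambda>u. if u $ lastc < 0 then Hm u else Hp u) n x = 0"
    using False zero n by (intro laplacian_F_eq_0_far[where R = R]) auto
  then show ?thesis
    using \<open>0 \<le> M\<close> by simp
qed

lemma cube_slab_bound_arith: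
  fixes n M R :: real and d :: nat
  assumes n: "1 \<le> n" and "0 \<le> M" "0 \<le> R" and d: "1 \<le> d"
  shows "real d * (2 * M / n\<^sup>2) * (2 * (n * (R + 1)) + 1) ^ d
      + 2 * M / n * (2 * (2 * (n * (R + 1)) + 1) ^ (d - 1))
    \<le> (2 * real d * M * (2 * R + 3) ^ d + 4 * M * (2 * R + 3) ^ (d - 1)) * n ^ d / n\<^sup>2"
proof -
  define W where "W = 2 * R + 3"
  have w: "0 \<le> 2 * (n * (R + 1)) + 1" "2 * (n * (R + 1)) + 1 \<le> n * W"
    using assms by (auto simp: W_def algebra_simps)
  have "(2 * (n * (R + 1)) + 1) ^ k \<le> n ^ k * W ^ k" for k
    using power_mono[OF w(2) w(1), of k] by (simp add: power_mult_distrib)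
  then have "real d * (2 * M / n\<^sup>2) * (2 * (n * (R + 1)) + 1) ^ d
      + 2 * M / n * (2 * (2 * (n * (R + 1)) + 1) ^ (d - 1))
    \<le> real d * (2 * M / n\<^sup>2) * (n ^ d * W ^ d) + 2 * M / n * (2 * (n ^ (d - 1) * W ^ (d - 1)))"
    using assms by (intro add_mono mult_left_mono) auto
  also have "n ^ d = n * n ^ (d - 1)"
    using d by (simp add: power_eq_if)
  then have "real d * (2 * M / n\<^sup>2) * (n ^ d * W ^ d) + 2 * M / n * (2 * (n ^ (d - 1) * W ^ (d - 1)))
      = (2 * real d * M * W ^ d + 4 * M * W ^ (d - 1)) * n ^ d / n\<^sup>2"
    using n by (simp add: field_simps power2_eq_square)
  finally show ?thesis
    unfolding W_def .
qed

lemma laplacian_F_sums_compact: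
  fixes Gm Gp :: "real \<Rightarrow> (real,'d::{finite,linorder}) vec \<Rightarrow> real"
  assumes "C12c T Gm" and "C12c T Gp"
  shows "\<exists>K. laplacian_F_sums_le T (\<lambda>s u. if u $ lastc < 0 then Gm s u else Gp s u) K"
proof -
  obtain R M D1m D2m D1p D2p where "0 \<le> R" "0 \<le> M"
    and pm: "\<And>s. s \<in> {0..T} \<Longrightarrow> has_partials2 (Gm s) (D1m s) (D2m s)"
    and pp: "\<And>s. s \<in> {0..T} \<Longrightarrow> has_partials2 (Gp s) (D1p s) (D2p s)"
    and zero: "\<And>s u. s \<in> {0..T} \<Longrightarrow> R < norm u \<Longrightarrow> Gm s u = 0 \<and> Gp s u = 0"
    and bound: "\<And>s v i. s \<in> {0..T} \<Longrightarrow> norm v \<le> R + 2 \<Longrightarrow>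
      \<bar>D1m s i v\<bar> \<le> M \<and> \<bar>D2m s i i v\<bar> \<le> M \<and> \<bar>D1p s i v\<bar> \<le> M \<and> \<bar>D2p s i i v\<bar> \<le> M"
    by (fact C12c_pair_bounds[OF assms])
  define d where "d = CARD('d)"
  define K where "K = 2 * real d * M * (2 * R + 3) ^ d + 4 * M * (2 * R + 3) ^ (d - 1)"
  show ?thesis
    unfolding laplacian_F_sums_le_def
  proof (intro exI allI impI ballI)
    fix n :: nat and s and F :: "(real,'d) vec set"
    assume n: "n \<ge> 1" and s: "s \<in> {0..T}" and F: "finite F" "F \<subseteq> Zd"
    define r where "r = real n * (R + 1)"
    define c1 where "c1 = real d * (2 * M / (real n)\<^sup>2)"
    define c2 where "c2 = 2 * M / real n"
    have "0 \<le> r" "0 \<le> c1" "0 \<le> c2"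
      using \<open>0 \<le> R\<close> \<open>0 \<le> M\<close> by (simp_all add: r_def c1_def c2_def)
    have "\<bar>laplacian_F (\<lambda>u. if u $ lastc < 0 then Gm s u else Gp s u) n x\<bar>
        \<le> c1 * indicator (Zd_cube r) x + c2 * indicator (Zd_slab r) x" if "x \<in> F" for x
      unfolding c1_def c2_def r_def d_def
      using zero bound s F that \<open>0 \<le> R\<close> \<open>0 \<le> M\<close>
      by (intro laplacian_F_compact_pointwise[OF pm[OF s] pp[OF s] n]) auto
    then have "(\<Sum>x\<in>F. \<bar>laplacian_F (\<lambda>u. if u $ lastc < 0 then Gm s u else Gp s u) n x\<bar>)
        \<le> (\<Sum>x\<in>F. c1 * indicator (Zd_cube r) x) + (\<Sum>x\<in>F. c2 * indicator (Zd_slab r) x)"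
      by (simp add: sum_mono flip: sum.distrib)
    also have "\<dots> \<le> c1 * real (card (Zd_cube r :: (real,'d) vec set))
        + c2 * real (card (Zd_slab r :: (real,'d) vec set))"
      using F \<open>0 \<le> r\<close> \<open>0 \<le> c1\<close> \<open>0 \<le> c2\<close>
      by (intro add_mono sum_indicator_le_card card_Zd_cube card_Zd_slab)
    also have "\<dots> \<le> c1 * (2 * r + 1) ^ d + c2 * (2 * (2 * r + 1) ^ (d - 1))"
      unfolding d_def using \<open>0 \<le> r\<close> \<open>0 \<le> c1\<close> \<open>0 \<le> c2\<close>
      by (intro add_mono mult_left_mono card_Zd_cube card_Zd_slab)
    also have "\<dots> \<le> K * real n ^ d / (real n)\<^sup>2"
      unfolding c1_def c2_def r_def K_def using n \<open>0 \<le> R\<close> \<open>0 \<le> M\<close>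
      by (intro cube_slab_bound_arith) (simp_all add: d_def Suc_le_eq)
    finally show "(\<Sum>x\<in>F. \<bar>laplacian_F (\<lambda>u. if u $ lastc < 0 then Gm s u else Gp s u) n x\<bar>)
        \<le> K * real n ^ CARD('d) / (real n)\<^sup>2"
      by (simp add: d_def)
  qed
qed

lemma sum_inverse_squares_nat_le:
  fixes a :: real and N :: "nat set"
  assumes a: "1 \<le> a" and N: "finite N"
  shows "(\<Sum>k\<in>N. 1 / (a\<^sup>2 + (real k)\<^sup>2)) \<le> 4 / a"
proof -
  have telescope: "1 / (a\<^sup>2 + (real k)\<^sup>2) \<le> 4 * (1 / (a + real k) - 1 / (a + real (Suc k)))" for k
  proof -
    have "real k \<le> (real k)\<^sup>2"
      by (cases k) (auto simp: power2_eq_square)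
    moreover have "a \<le> a\<^sup>2" "2 * (a * real k) \<le> a\<^sup>2 + (real k)\<^sup>2"
      using a sum_squares_bound[of a "real k"] by (auto simp: power2_eq_square)
    moreover have "(a + real k) * (a + real k + 1) = a\<^sup>2 + (real k)\<^sup>2 + 2 * (a * real k) + a + real k"
      by (simp add: algebra_simps power2_eq_square)
    ultimately have le: "(a + real k) * (a + real k + 1) \<le> 4 * a\<^sup>2 + 4 * (real k)\<^sup>2"
      using zero_le_power2[of a] zero_le_power2[of "real k"] by linarith
    have pos: "0 < a + real k" "0 < a\<^sup>2 + (real k)\<^sup>2"
      using a by (auto intro: add_pos_nonneg)
    have "1 / (a\<^sup>2 + (real k)\<^sup>2) = 4 / (4 * a\<^sup>2 + 4 * (real k)\<^sup>2)"
      using pos by (simp add: field_simps)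
    also have "\<dots> \<le> 4 / ((a + real k) * (a + real k + 1))"
      using le pos by (intro divide_left_mono) auto
    also have "\<dots> = 4 * (1 / (a + real k) - 1 / (a + real (Suc k)))"
      using pos by (simp add: field_simps)
    finally show ?thesis .
  qed
  obtain K where "N \<subseteq> {..<K}"
    using N finite_nat_bounded by blast
  then have "(\<Sum>k\<in>N. 1 / (a\<^sup>2 + (real k)\<^sup>2)) \<le> (\<Sum>k<K. 1 / (a\<^sup>2 + (real k)\<^sup>2))"
    by (intro sum_mono2) auto
  also have "\<dots> \<le> (\<Sum>k<K. 4 * (1 / (a + real k) - 1 / (a + real (Suc k))))"
    by (intro sum_mono telescope)
  also have "\<dots> = 4 * (\<Sum>k<K. 1 / (a + real k) - 1 / (a + real (Suc k)))"
    by (simp only: sum_distrib_left)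
  also have "\<dots> = 4 * (1 / a - 1 / (a + real K))"
    using sum_lessThan_telescope'[of "\<lambda>k. 1 / (a + real k)" K] by simp
  also have "\<dots> \<le> 4 / a"
    using a by simp
  finally show ?thesis .
qed

lemma sum_inverse_squares_int_le:
  fixes a :: real and S :: "int set"
  assumes a: "1 \<le> a" and S: "finite S"
  shows "(\<Sum>m\<in>S. 1 / (a\<^sup>2 + (real_of_int m)\<^sup>2)) \<le> 8 / a"
proof -
  have half: "(\<Sum>m\<in>P. 1 / (a\<^sup>2 + (real_of_int m)\<^sup>2)) \<le> 4 / a"
    if "P \<subseteq> S" and inj: "inj_on (\<lambda>m. nat \<bar>m\<bar>) P" for P
  proof -
    have "(\<Sum>m\<in>P. 1 / (a\<^sup>2 + (real_of_int m)\<^sup>2)) = (\<Sum>k\<in>(\<lambda>m. nat \<bar>m\<bar>) ` P. 1 / (a\<^sup>2 + (real k)\<^sup>2))"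
      by (simp add: sum.reindex[OF inj])
    also have "\<dots> \<le> 4 / a"
      using a finite_subset[OF \<open>P \<subseteq> S\<close> S] by (intro sum_inverse_squares_nat_le) auto
    finally show ?thesis .
  qed
  have inj: "inj_on (\<lambda>m. nat \<bar>m\<bar>) {m\<in>S. 0 \<le> m}" "inj_on (\<lambda>m. nat \<bar>m\<bar>) {m\<in>S. m < 0}"
    by (auto intro!: inj_onI)
  have "S = {m\<in>S. 0 \<le> m} \<union> {m\<in>S. m < 0}"
    by auto
  then have "(\<Sum>m\<in>S. 1 / (a\<^sup>2 + (real_of_int m)\<^sup>2))
      = (\<Sum>m\<in>{m\<in>S. 0 \<le> m}. 1 / (a\<^sup>2 + (real_of_int m)\<^sup>2)) + (\<Sum>m\<in>{m\<in>S. m < 0}. 1 / (a\<^sup>2 + (real_of_int m)\<^sup>2))"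
    using S by (simp add: sum.union_disjoint[symmetric] disjoint_iff)
  also have "\<dots> \<le> 4 / a + 4 / a"
    using inj by (intro add_mono half) auto
  finally show ?thesis
    by simp
qed

lemma CARD_1_eq_lastc:
  assumes "CARD('d::{finite,linorder}) = 1"
  shows "(j::'d) = lastc"
proof -
  obtain a :: 'd where a: "UNIV = {a}"
    using assms card_1_singleton_iff[of "UNIV :: 'd set"] by auto
  have "j \<in> {a}" "lastc \<in> {a}"
    unfolding a[symmetric] by simp_all
  then show ?thesis
    by simp
qed

lemma decay_bound_nearby:
  fixes u v :: "'a::real_normed_vector"
  assumes near: "norm (v - u) \<le> 1" and decay: "(1 + (norm v)\<^sup>2) * \<bar>D\<bar> \<le> C"
  shows "\<bar>D\<bar> \<le> 3 * C / (1 + (norm u)\<^sup>2)"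
proof -
  have "norm u \<le> norm v + 1"
    using near norm_triangle_sub[of u v] by (simp add: norm_minus_commute)
  then have "(norm u)\<^sup>2 \<le> (norm v + 1)\<^sup>2"
    by (intro power_mono) auto
  also have "\<dots> = (norm v)\<^sup>2 + 2 * norm v + 1"
    by (simp add: power2_eq_square algebra_simps)
  finally have "(norm u)\<^sup>2 \<le> (norm v)\<^sup>2 + 2 * norm v + 1" .
  moreover have "2 * norm v \<le> (norm v)\<^sup>2 + 1"
    using sum_squares_bound[of "norm v" 1] by simp
  ultimately have "1 + (norm u)\<^sup>2 \<le> 3 + 3 * (norm v)\<^sup>2"
    using zero_le_power2[of "norm v"] by linarith
  then have "\<bar>D\<bar> * (1 + (norm u)\<^sup>2) \<le> \<bar>D\<bar> * (3 + 3 * (norm v)\<^sup>2)"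
    by (rule mult_left_mono) simp
  also have "\<dots> = 3 * ((1 + (norm v)\<^sup>2) * \<bar>D\<bar>)"
    by (simp add: algebra_simps)
  also have "\<dots> \<le> 3 * C"
    using decay by simp
  finally have "\<bar>D\<bar> * (1 + (norm u)\<^sup>2) \<le> 3 * C" .
  moreover have "0 < 1 + (norm u)\<^sup>2"
    by (simp add: add_pos_nonneg)
  ultimately show ?thesis
    by (simp add: pos_le_divide_eq)
qed

lemma Zd_inj_on_floor_lastc:
  assumes "CARD('d::{finite,linorder}) = 1"
  shows "inj_on (\<lambda>x::(real,'d) vec. \<lfloor>x $ lastc\<rfloor>) Zd"
proof (rule inj_onI)
  fix x y :: "(real,'d) vec"
  assume "x \<in> Zd" "y \<in> Zd" "\<lfloor>x $ lastc\<rfloor> = \<lfloor>y $ lastc\<rfloor>"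
  moreover have "x $ lastc \<in> \<int>" "y $ lastc \<in> \<int>"
    using \<open>x \<in> Zd\<close> \<open>y \<in> Zd\<close> by (simp_all add: Zd_def)
  ultimately have "x $ lastc = y $ lastc"
    by (metis of_int_floor)
  then show "x = y"
    using CARD_1_eq_lastc[OF assms] by (metis vec_eq_iff)
qed

lemma decay_weight_le:
  fixes x :: "(real,'d::{finite,linorder}) vec" and n C :: real
  assumes n: "0 < n" and "0 \<le> C"
  shows "2 * (3 * C / (1 + (norm ((1 / n) *\<^sub>R x))\<^sup>2)) / n\<^sup>2 \<le> 6 * C / (n\<^sup>2 + (x $ lastc)\<^sup>2)"
proof -
  define W where "W = 1 + (norm ((1 / n) *\<^sub>R x))\<^sup>2"
  have "(x $ lastc)\<^sup>2 \<le> (norm x)\<^sup>2"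
    using component_le_norm_cart[of x lastc] by (metis abs_ge_zero power2_abs power_mono)
  then have "n\<^sup>2 + (x $ lastc)\<^sup>2 \<le> n\<^sup>2 * W"
    using n by (simp add: W_def field_simps power_divide)
  moreover have "0 < n\<^sup>2 + (x $ lastc)\<^sup>2" "0 < W"
    using n by (simp_all add: W_def add_pos_nonneg)
  ultimately have "6 * C / (n\<^sup>2 * W) \<le> 6 * C / (n\<^sup>2 + (x $ lastc)\<^sup>2)"
    using \<open>0 \<le> C\<close> by (intro divide_left_mono mult_pos_pos) auto
  moreover have "2 * (3 * C / W) / n\<^sup>2 = 6 * C / (n\<^sup>2 * W)"
    using n \<open>0 < W\<close> by (simp add: field_simps)
  ultimately show ?thesis
    unfolding W_def by linarith
qed

lemma laplacian_F_decay_pointwise: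
  fixes Hm Hp :: "(real,'d::{finite,linorder}) vec \<Rightarrow> real"
  assumes d1: "CARD('d) = 1"
    and Hm: "has_partials2 Hm D1m D2m" and Hp: "has_partials2 Hp D1p D2p"
    and n: "n \<ge> 1" and x: "x \<in> Zd"
    and decay: "\<And>v i. (1 + (norm v)\<^sup>2) * \<bar>D1m i v\<bar> \<le> C \<and> (1 + (norm v)\<^sup>2) * \<bar>D2m i i v\<bar> \<le> C
      \<and> (1 + (norm v)\<^sup>2) * \<bar>D1p i v\<bar> \<le> C \<and> (1 + (norm v)\<^sup>2) * \<bar>D2p i i v\<bar> \<le> C"
  shows "\<bar>laplacian_F (\<lambda>u. if u $ lastc < 0 then Hm u else Hp u) n x\<bar>
    \<le> 6 * C / ((real n)\<^sup>2 + (x $ lastc)\<^sup>2) + 6 * C / real n * indicator (Zd_slab 0) x"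
proof -
  define A where "A = 3 * C / (1 + (norm ((1 / real n) *\<^sub>R x))\<^sup>2)"
  have "\<bar>D1m lastc 0\<bar> \<le> C"
    using decay[of 0 lastc] by simp
  then have "0 \<le> C"
    by (meson abs_ge_zero order_trans)
  have near: "\<bar>D1m i v\<bar> \<le> A \<and> \<bar>D2m i i v\<bar> \<le> A \<and> \<bar>D1p i v\<bar> \<le> A \<and> \<bar>D2p i i v\<bar> \<le> A"
    if "norm (v - (1 / real n) *\<^sub>R x) \<le> 1 / real n" for v i
  proof -
    have "norm (v - (1 / real n) *\<^sub>R x) \<le> 1"
      using that n order_trans[of _ "1 / real n" 1] by simp
    then show ?thesis
      unfolding A_def using decay[of v i] by (blast intro: decay_bound_nearby)
  qed
  have "\<bar>laplacian_F (\<lambda>u. if u $ lastc < 0 then Hm u else Hp u) n x\<bar>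
      \<le> real CARD('d) * (2 * A / (real n)\<^sup>2)
        + (if x $ lastc = 0 \<or> x $ lastc = -1 then 2 * A / real n else 0)"
    using n x near by (intro laplacian_F_piecewise_bound[OF Hm Hp]) auto
  moreover have "real CARD('d) * (2 * A / (real n)\<^sup>2) \<le> 6 * C / ((real n)\<^sup>2 + (x $ lastc)\<^sup>2)"
    unfolding A_def using d1 n decay_weight_le[of "real n" C x] \<open>0 \<le> C\<close> by simp
  moreover have "(if x $ lastc = 0 \<or> x $ lastc = -1 then 2 * A / real n else 0)
      \<le> 6 * C / real n * indicator (Zd_slab 0) x"
  proof -
    have "A \<le> 3 * C / 1"
      unfolding A_def using \<open>0 \<le> C\<close> by (intro divide_left_mono) (auto simp: add_pos_nonneg)
    moreover have "x $ lastc = 0 \<or> x $ lastc = -1 \<Longrightarrow> x \<in> Zd_slab 0"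
      using x CARD_1_eq_lastc[OF d1] by (auto simp: Zd_slab_def)
    ultimately show ?thesis
      using n \<open>0 \<le> C\<close> by (auto simp: indicator_def divide_right_mono)
  qed
  ultimately show ?thesis
    by linarith
qed

lemma sum_inverse_squares_lastc_le:
  fixes F :: "(real,'d::{finite,linorder}) vec set" and a :: real
  assumes d1: "CARD('d) = 1" and F: "finite F" "F \<subseteq> Zd" and a: "1 \<le> a"
  shows "(\<Sum>x\<in>F. 1 / (a\<^sup>2 + (x $ lastc)\<^sup>2)) \<le> 8 / a"
proof -
  have inj: "inj_on (\<lambda>x. \<lfloor>x $ lastc\<rfloor>) F"
    using Zd_inj_on_floor_lastc[OF d1] F(2) by (rule inj_on_subset)
  have "(\<Sum>x\<in>F. 1 / (a\<^sup>2 + (x $ lastc)\<^sup>2)) = (\<Sum>x\<in>F. 1 / (a\<^sup>2 + (real_of_int \<lfloor>x $ lastc\<rfloor>)\<^sup>2))"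
    using F(2) by (intro sum.cong) (auto simp: Zd_def)
  also have "\<dots> = (\<Sum>m\<in>(\<lambda>x. \<lfloor>x $ lastc\<rfloor>) ` F. 1 / (a\<^sup>2 + (real_of_int m)\<^sup>2))"
    by (simp add: sum.reindex[OF inj])
  also have "\<dots> \<le> 8 / a"
    using a F(1) by (intro sum_inverse_squares_int_le) auto
  finally show ?thesis .
qed

lemma laplacian_F_sums_decay:
  fixes Gm Gp :: "real \<Rightarrow> (real,'d::{finite,linorder}) vec \<Rightarrow> real"
  assumes d1: "CARD('d) = 1" and "S12 T Gm" and "S12 T Gp"
  shows "\<exists>K. laplacian_F_sums_le T (\<lambda>s u. if u $ lastc < 0 then Gm s u else Gp s u) K"
proof -
  obtain C D1m D2m D1p D2p where "0 \<le> C"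
    and pm: "\<And>s. s \<in> {0..T} \<Longrightarrow> has_partials2 (Gm s) (D1m s) (D2m s)"
    and pp: "\<And>s. s \<in> {0..T} \<Longrightarrow> has_partials2 (Gp s) (D1p s) (D2p s)"
    and decay: "\<And>s v i. s \<in> {0..T} \<Longrightarrow>
      (1 + (norm v)\<^sup>2) * \<bar>D1m s i v\<bar> \<le> C \<and> (1 + (norm v)\<^sup>2) * \<bar>D2m s i i v\<bar> \<le> C
      \<and> (1 + (norm v)\<^sup>2) * \<bar>D1p s i v\<bar> \<le> C \<and> (1 + (norm v)\<^sup>2) * \<bar>D2p s i i v\<bar> \<le> C"
    by (fact S12_pair_decay[OF assms(2,3)])
  show ?thesis
    unfolding laplacian_F_sums_le_def
  proof (intro exI allI impI ballI)
    fix n :: nat and s and F :: "(real,'d) vec set"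
    assume n: "n \<ge> 1" and s: "s \<in> {0..T}" and F: "finite F" "F \<subseteq> Zd"
    have "\<bar>laplacian_F (\<lambda>u. if u $ lastc < 0 then Gm s u else Gp s u) n x\<bar>
        \<le> 6 * C * (1 / ((real n)\<^sup>2 + (x $ lastc)\<^sup>2)) + 6 * C / real n * indicator (Zd_slab 0) x"
      if "x \<in> F" for x
      using laplacian_F_decay_pointwise[OF d1 pm[OF s] pp[OF s] n, of x C] decay[OF s] that F by auto
    then have "(\<Sum>x\<in>F. \<bar>laplacian_F (\<lambda>u. if u $ lastc < 0 then Gm s u else Gp s u) n x\<bar>)
        \<le> 6 * C * (\<Sum>x\<in>F. 1 / ((real n)\<^sup>2 + (x $ lastc)\<^sup>2))
          + (\<Sum>x\<in>F. 6 * C / real n * indicator (Zd_slab 0) x)"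
      by (simp add: sum_mono sum_distrib_left flip: sum.distrib)
    also have "\<dots> \<le> 6 * C * (8 / real n) + 6 * C / real n * real (card (Zd_slab 0 :: (real,'d) vec set))"
      using F n \<open>0 \<le> C\<close>
      by (intro add_mono mult_left_mono sum_inverse_squares_lastc_le[OF d1] sum_indicator_le_card
          card_Zd_slab) auto
    also have "\<dots> \<le> 6 * C * (8 / real n) + 6 * C / real n * 2"
      using card_Zd_slab(2)[of 0, where 'd = 'd] d1 \<open>0 \<le> C\<close> by (intro add_mono mult_left_mono) auto
    also have "\<dots> = 60 * C * real n ^ CARD('d) / (real n)\<^sup>2"
      using d1 n by (simp add: field_simps power2_eq_square)
    finally show "(\<Sum>x\<in>F. \<bar>laplacian_F (\<lambda>u. if u $ lastc < 0 then Gm s u else Gp s u) n x\<bar>)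
        \<le> 60 * C * real n ^ CARD('d) / (real n)\<^sup>2" .
  qed
qed

lemma Y_SEP_le:
  fixes G :: "real \<Rightarrow> (real,'d::{finite,linorder}) vec \<Rightarrow> real"
  assumes B: "\<And>s F. s \<in> {0..T} \<Longrightarrow> finite F \<Longrightarrow> F \<subseteq> Zd \<Longrightarrow>
      (\<Sum>x\<in>F. \<bar>laplacian_F (G s) n x\<bar>) \<le> B"
  shows "Y_SEP T \<gamma> G n \<le> ennreal (real n powr \<gamma> / real n ^ CARD('d) * B)"
  unfolding Y_SEP_def laplacian_F_def[symmetric]
proof (rule SUP_least)
  fix s assume s: "s \<in> {0..T}"
  have "(\<Sum>\<^sub>\<infinity>x\<in>Zd. ennreal \<bar>laplacian_F (G s) n x\<bar>) \<le> ennreal B"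
  proof (rule infsum_le_finite_sums)
    show "(\<lambda>x. ennreal \<bar>laplacian_F (G s) n x\<bar>) summable_on Zd"
      by (simp add: nonneg_summable_on_complete)
    fix F :: "(real,'d) vec set"
    assume "finite F" "F \<subseteq> Zd"
    have "(\<Sum>x\<in>F. ennreal \<bar>laplacian_F (G s) n x\<bar>) = ennreal (\<Sum>x\<in>F. \<bar>laplacian_F (G s) n x\<bar>)"
      by (rule sum_ennreal) simp
    also have "\<dots> \<le> ennreal B"
      using B[OF s \<open>finite F\<close> \<open>F \<subseteq> Zd\<close>] by (rule ennreal_leI)
    finally show "(\<Sum>x\<in>F. ennreal \<bar>laplacian_F (G s) n x\<bar>) \<le> ennreal B" .
  qed
  then have "ennreal (real n powr \<gamma> / real n ^ CARD('d)) * (\<Sum>\<^sub>\<infinity>x\<in>Zd. ennreal \<bar>laplacian_F (G s) n x\<bar>)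
      \<le> ennreal (real n powr \<gamma> / real n ^ CARD('d)) * ennreal B"
    by (rule mult_left_mono) simp
  also have "\<dots> = ennreal (real n powr \<gamma> / real n ^ CARD('d) * B)"
    by (rule ennreal_mult'[symmetric]) simp
  finally show "ennreal (real n powr \<gamma> / real n ^ CARD('d)) * (\<Sum>\<^sub>\<infinity>x\<in>Zd. ennreal \<bar>laplacian_F (G s) n x\<bar>)
      \<le> ennreal (real n powr \<gamma> / real n ^ CARD('d) * B)" .
qed

lemma Y_SEP_tendsto_0:
  fixes G :: "real \<Rightarrow> (real,'d::{finite,linorder}) vec \<Rightarrow> real"
  assumes "\<gamma> < 2" and K: "laplacian_F_sums_le T G K"
  shows "Y_SEP T \<gamma> G \<longlonglongrightarrow> 0"
proof (rule tendsto_sandwich[of "\<lambda>n. 0" _ _ "\<lambda>n. ennreal (K * real n powr (\<gamma> - 2))"])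
  have "Y_SEP T \<gamma> G n \<le> ennreal (K * real n powr (\<gamma> - 2))" if n: "n \<ge> 1" for n
  proof -
    have "real n powr \<gamma> / real n ^ CARD('d) * (K * real n ^ CARD('d) / (real n)\<^sup>2)
        = K * real n powr (\<gamma> - 2)"
      using n by (simp add: powr_diff powr_realpow field_simps)
    then show ?thesis
      using Y_SEP_le[of T G n "K * real n ^ CARD('d) / (real n)\<^sup>2" \<gamma>] K n
      by (simp add: laplacian_F_sums_le_def)
  qed
  then show "\<forall>\<^sub>F n in sequentially. Y_SEP T \<gamma> G n \<le> ennreal (K * real n powr (\<gamma> - 2))"
    using eventually_sequentially by blast
  have "(\<lambda>n. K * real n powr (\<gamma> - 2)) \<longlonglongrightarrow> K * 0"
    using \<open>\<gamma> < 2\<close> by (intro tendsto_mult tendsto_const tendsto_neg_powr filterlim_real_sequentially) simp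
  then show "(\<lambda>n. ennreal (K * real n powr (\<gamma> - 2))) \<longlonglongrightarrow> 0"
    using tendsto_ennrealI by fastforce
qed simp_all

theorem mainTheorem6:
  fixes T \<gamma> :: real and G :: "real \<Rightarrow> (real,'d::{finite,linorder}) vec \<Rightarrow> real"
  assumes "T > 0" and "0 < \<gamma>" and "\<gamma> < 2" and "S_gamma0 T \<gamma> G"
  shows "Y_SEP T \<gamma> G \<longlonglongrightarrow> 0"
proof -
  obtain Gm Gp where Gm: "S_gamma T \<gamma> Gm" and Gp: "S_gamma T \<gamma> Gp"
    and G: "\<forall>t\<in>{0..T}. \<forall>u. G t u = (if u $ lastc < 0 then Gm t u else Gp t u)"
    using assms(4) unfolding S_gamma0_def by blast
  have "\<exists>K. laplacian_F_sums_le T (\<lambda>s u. if u $ lastc < 0 then Gm s u else Gp s u) K"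
  proof (cases "\<gamma> \<le> 1 \<or> CARD('d) \<ge> 2")
    case True
    then show ?thesis
      using Gm Gp by (intro laplacian_F_sums_compact) (simp_all add: S_gamma_def)
  next
    case False
    moreover have "0 < CARD('d)"
      by simp
    ultimately have "CARD('d) = 1"
      by linarith
    with False show ?thesis
      using Gm Gp by (intro laplacian_F_sums_decay) (simp_all add: S_gamma_def)
  qed
  moreover have "laplacian_F_sums_le T G K
      \<longleftrightarrow> laplacian_F_sums_le T (\<lambda>s u. if u $ lastc < 0 then Gm s u else Gp s u) K" for K
    using G by (intro laplacian_F_sums_le_cong) auto
  ultimately show ?thesis
    using Y_SEP_tendsto_0[OF \<open>\<gamma> < 2\<close>] by blast
qed

end
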